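(* Let $F$ be an Archimedean vector lattice. The order convergence on $F$ is idempotent: if $(f_{\alpha})_{\alpha\in A},(g_{\beta})_{\beta\in B}\subset F_{+}$ are nets with $g_{\beta}\xrightarrow{o} 0_{F}$ and $(f_{\alpha}-g_{\beta})^{+}\xrightarrow[\alpha]{o} 0_{F}$ for every $\beta\in B$, then $f_{\alpha}\xrightarrow{o} 0_{F}$.
   Context: A net $(f_\alpha)$ in $F$ order converges to $f$ (written $f_\alpha\xrightarrow{o}f$) if there exists $G\subset F$ with $\bigwedge G=0_F$ such that for every $g\in G$ there is $\alpha_0$ with $|f_\alpha-f|\le g$ for all $\alpha\ge\alpha_0$. *)

theory Defs
  imports Main "HOL-Library.Lattice_Algebras"
begin

text \<open>A (real) vector lattice is modelled by a type of sort
  ordered_real_vector (real vector space with translation- and positive-scaling-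
  compatible order) together with lattice_ab_group_add_abs (the order is a
  lattice; the absolute value is sup x (-x)).\<close>

definition archimedean_vl :: "'a::{ordered_real_vector, lattice_ab_group_add_abs} itself \<Rightarrow> bool" where
  "archimedean_vl _ \<longleftrightarrow>
     (\<forall>x y :: 'a. 0 \<le> x \<and> (\<forall>n::nat. real n *\<^sub>R x \<le> y) \<longrightarrow> x = 0)"

definition directed_set :: "'i set \<Rightarrow> ('i \<Rightarrow> 'i \<Rightarrow> bool) \<Rightarrow> bool" where
  "directed_set A le \<longleftrightarrow> A \<noteq> {} \<and>
     (\<forall>a\<in>A. le a a) \<and>
     (\<forall>a\<in>A. \<forall>b\<in>A. \<forall>c\<in>A. le a b \<and> le b c \<longrightarrow> le a c) \<and>
     (\<forall>a\<in>A. \<forall>b\<in>A. \<exists>c\<in>A. le a c \<and> le b c)"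

text \<open>The infimum of G exists and equals x (in a possibly non-complete lattice).\<close>
definition is_infimum :: "'a::order set \<Rightarrow> 'a \<Rightarrow> bool" where
  "is_infimum G x \<longleftrightarrow> (\<forall>g\<in>G. x \<le> g) \<and> (\<forall>y. (\<forall>g\<in>G. y \<le> g) \<longrightarrow> y \<le> x)"

definition order_conv ::
  "'i set \<Rightarrow> ('i \<Rightarrow> 'i \<Rightarrow> bool) \<Rightarrow> ('i \<Rightarrow> 'a::lattice_ab_group_add_abs) \<Rightarrow> 'a \<Rightarrow> bool" where
  "order_conv A le f l \<longleftrightarrow>
     (\<exists>G. is_infimum G 0 \<and>
        (\<forall>g\<in>G. \<exists>a0\<in>A. \<forall>a\<in>A. le a0 a \<longrightarrow> \<bar>f a - l\<bar> \<le> g))"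

end

theory Submission
  imports Defs
begin

text \<open>If \<open>G\<close> witnesses \<open>g\<^sub>\<beta> \<rightarrow> 0\<close> and \<open>H\<^sub>\<beta>\<close> witnesses \<open>(f\<^sub>\<alpha> - g\<^sub>\<beta>)\<^sup>+ \<rightarrow> 0\<close>,
  then the union over \<open>\<beta>\<close> of the sets \<open>{g\<^sub>\<beta> + h | h \<in> H\<^sub>\<beta>}\<close> witnesses \<open>f\<^sub>\<alpha> \<rightarrow> 0\<close>:
  eventually \<open>f\<^sub>\<alpha> \<le> g\<^sub>\<beta> + (f\<^sub>\<alpha> - g\<^sub>\<beta>)\<^sup>+ \<le> g\<^sub>\<beta> + h\<close>, and the union has infimum
  \<open>inf\<^sub>\<beta> g\<^sub>\<beta>\<close>, which is \<open>0\<close> because every lower bound of the \<open>g\<^sub>\<beta>\<close> lies below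
  every element of \<open>G\<close>.\<close>

lemma is_infimum_lower: "is_infimum G x \<Longrightarrow> g \<in> G \<Longrightarrow> x \<le> g"
  unfolding is_infimum_def by blast

lemma is_infimum_greatest: "is_infimum G x \<Longrightarrow> (\<And>g. g \<in> G \<Longrightarrow> y \<le> g) \<Longrightarrow> y \<le> x"
  unfolding is_infimum_def by blast

lemma is_infimum_translate:
  fixes c :: "'a::ordered_ab_group_add"
  assumes "is_infimum H x"
  shows "is_infimum ((+) c ` H) (c + x)"
  unfolding is_infimum_def
proof (intro conjI allI impI ballI)
  show "c + x \<le> k" if "k \<in> (+) c ` H" for k
    using that is_infimum_lower[OF assms] by auto
  show "y \<le> c + x" if "\<forall>k\<in>(+) c ` H. y \<le> k" for y
  proof -
    have "y - c \<le> x"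
      using that by (intro is_infimum_greatest[OF assms]) (auto simp: algebra_simps)
    then show ?thesis
      by (simp add: algebra_simps)
  qed
qed

lemma is_infimum_UN:
  assumes "\<And>b. b \<in> B \<Longrightarrow> is_infimum (S b) (m b)"
    and "is_infimum (m ` B) x"
  shows "is_infimum (\<Union>b\<in>B. S b) x"
  unfolding is_infimum_def
proof (intro conjI allI impI ballI)
  fix k assume "k \<in> (\<Union>b\<in>B. S b)"
  then obtain b where "b \<in> B" "k \<in> S b" by blast
  then have "x \<le> m b" "m b \<le> k"
    using assms is_infimum_lower by blast+
  then show "x \<le> k" by (rule order_trans)
next
  fix y assume lower: "\<forall>k\<in>(\<Union>b\<in>B. S b). y \<le> k"
  have "y \<le> m b" if "b \<in> B" for b
    using that lower by (intro is_infimum_greatest[OF assms(1)]) auto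
  then show "y \<le> x"
    by (intro is_infimum_greatest[OF assms(2)]) blast
qed

lemma order_conv_zero_imp_is_infimum:
  fixes g :: "'j \<Rightarrow> 'a::lattice_ab_group_add_abs"
  assumes "directed_set B leB"
    and "\<forall>b\<in>B. 0 \<le> g b"
    and "order_conv B leB g 0"
  shows "is_infimum (g ` B) 0"
  unfolding is_infimum_def
proof (intro conjI allI impI ballI)
  show "0 \<le> k" if "k \<in> g ` B" for k
    using that assms(2) by blast
  fix y
  assume lower: "\<forall>k\<in>g ` B. y \<le> k"
  obtain G where G: "is_infimum G 0"
    and eventually: "\<forall>h\<in>G. \<exists>b0\<in>B. \<forall>b\<in>B. leB b0 b \<longrightarrow> \<bar>g b - 0\<bar> \<le> h"
    using assms(3) unfolding order_conv_def by blast
  show "y \<le> 0"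
  proof (rule is_infimum_greatest[OF G])
    fix h
    assume "h \<in> G"
    then obtain b0 where "b0 \<in> B" and b0: "\<forall>b\<in>B. leB b0 b \<longrightarrow> \<bar>g b\<bar> \<le> h"
      using eventually by auto
    then obtain b where "b \<in> B" "leB b0 b"
      using assms(1) unfolding directed_set_def by blast
    then have "y \<le> g b" "g b \<le> \<bar>g b\<bar>" "\<bar>g b\<bar> \<le> h"
      using lower b0 abs_ge_self by auto
    then show "y \<le> h"
      by (meson order_trans)
  qed
qed

lemma le_add_if_pprt_diff_le:
  fixes x y h :: "'a::lattice_ab_group_add"
  assumes "pprt (x - y) \<le> h"
  shows "x \<le> y + h"
proof -
  have "x - y \<le> h"
    using assms by (simp add: pprt_def)
  then show ?thesis
    by (simp add: algebra_simps)
qed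

lemma order_conv_zero_if_pprt_diff:
  fixes f :: "'i \<Rightarrow> 'a::lattice_ab_group_add_abs" and g :: "'j \<Rightarrow> 'a"
  assumes "\<forall>a\<in>A. 0 \<le> f a"
    and "is_infimum (g ` B) 0"
    and "\<forall>b\<in>B. order_conv A leA (\<lambda>a. pprt (f a - g b)) 0"
  shows "order_conv A leA f 0"
proof -
  obtain H where H: "\<forall>b\<in>B. is_infimum (H b) 0 \<and>
      (\<forall>h\<in>H b. \<exists>a0\<in>A. \<forall>a\<in>A. leA a0 a \<longrightarrow> \<bar>pprt (f a - g b) - 0\<bar> \<le> h)"
    using bchoice[OF assms(3)[unfolded order_conv_def]] by blast
  define K where "K = (\<Union>b\<in>B. (+) (g b) ` H b)"
  have "is_infimum ((+) (g b) ` H b) (g b)" if "b \<in> B" for b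
    using is_infimum_translate[of "H b" 0 "g b"] H that by simp
  then have "is_infimum K 0"
    unfolding K_def using assms(2) by (rule is_infimum_UN)
  moreover have "\<exists>a0\<in>A. \<forall>a\<in>A. leA a0 a \<longrightarrow> \<bar>f a - 0\<bar> \<le> k" if "k \<in> K" for k
  proof -
    obtain b h where "b \<in> B" "h \<in> H b" and k: "k = g b + h"
      using \<open>k \<in> K\<close> unfolding K_def by blast
    then obtain a0 where "a0 \<in> A" and a0: "\<forall>a\<in>A. leA a0 a \<longrightarrow> pprt (f a - g b) \<le> h"
      using H by (metis abs_of_nonneg diff_zero zero_le_pprt)
    then show ?thesis
      using assms(1) le_add_if_pprt_diff_le k by fastforce
  qed
  ultimately show ?thesis
    unfolding order_conv_def by blast
qed

theorem proposition4p5: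
  fixes f :: "'i \<Rightarrow> 'a::{ordered_real_vector, lattice_ab_group_add_abs}"
    and g :: "'j \<Rightarrow> 'a"
    and A :: "'i set" and leA :: "'i \<Rightarrow> 'i \<Rightarrow> bool"
    and B :: "'j set" and leB :: "'j \<Rightarrow> 'j \<Rightarrow> bool"
  assumes "archimedean_vl TYPE('a)"
    and "directed_set A leA"
    and "directed_set B leB"
    and "\<forall>a\<in>A. 0 \<le> f a"
    and "\<forall>b\<in>B. 0 \<le> g b"
    and "order_conv B leB g 0"
    and "\<forall>b\<in>B. order_conv A leA (\<lambda>a. pprt (f a - g b)) 0"
  shows "order_conv A leA f 0"
proof -
  have "is_infimum (g ` B) 0"
    using assms(3,5,6) by (rule order_conv_zero_imp_is_infimum)
  then show ?thesis
    using assms(4,7) by (intro order_conv_zero_if_pprt_diff)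
qed

end
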